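(* Let $(X,d),(Y,d)$ be metric spaces, $E,F$ strictly convex normed spaces over $\mathbb{K}$, and $T:\mathrm{Lip}(X,E)\to\mathrm{Lip}(Y,F)$ a surjective linear isometry satisfying Property P. If $f\in\mathrm{Lip}(X,E)$ satisfies $\|Tf(y_0)\|=\|Tf\|_\infty>L(Tf)$ for some $y_0\in Y$, then $L(f)\le\|f\|_\infty$.
   Context: $\mathbb{K}=\mathbb{R}$ or $\mathbb{C}$. Strictly convex: $\|e_1+e_2\|<2$ whenever $e_1\ne e_2$ have norm $1$. $\mathrm{Lip}(X,E)$: bounded Lipschitz maps $X\to E$, with Lipschitz number $L(f)$ and norm $\|f\|_L=\max\{\|f\|_\infty,L(f)\}$; $T$ is an isometry for this norm. For $e\in E$, $\tilde e$ is the constant function with value $e$; Property P: for every $y\in Y$ there is $e\in E$ with $(T\tilde e)(y)\ne0$. *)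

theory Defs
  imports "HOL-Analysis.Analysis"
begin

definition strictly_convex :: "'e::real_normed_vector itself \<Rightarrow> bool" where
  "strictly_convex _ \<longleftrightarrow>
     (\<forall>e1 e2::'e. norm e1 = 1 \<and> norm e2 = 1 \<and> e1 \<noteq> e2 \<longrightarrow> norm (e1 + e2) < 2)"

definition Lip :: "('x::metric_space \<Rightarrow> 'e::real_normed_vector) set" where
  "Lip = {f. bounded (range f) \<and> (\<exists>C. lipschitz_on C UNIV f)}"

text \<open>Lipschitz number L(f) (0 if X has at most one point).\<close>
definition lip_num :: "('x::metric_space \<Rightarrow> 'e::real_normed_vector) \<Rightarrow> real" where
  "lip_num f = Sup ({0} \<union> {dist (f x) (f y) / dist x y | x y. x \<noteq> y})"

definition sup_norm :: "('x \<Rightarrow> 'e::real_normed_vector) \<Rightarrow> real" where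
  "sup_norm f = Sup (range (\<lambda>x. norm (f x)))"

definition lip_norm :: "('x::metric_space \<Rightarrow> 'e::real_normed_vector) \<Rightarrow> real" where
  "lip_norm f = max (sup_norm f) (lip_num f)"

end

theory Submission
  imports Defs
begin

text \<open>Suppose \<open>\<parallel>f\<parallel>\<^sub>\<infinity> < L(f)\<close>. Then \<open>\<parallel>Tf\<parallel>\<^sub>L = \<parallel>f\<parallel>\<^sub>L = L(f)\<close>, and since \<open>\<parallel>Tf\<parallel>\<^sub>\<infinity> > L(Tf)\<close> the peak value
  \<open>Tf(y\<^sub>0)\<close> has norm \<open>L(f)\<close>. Perturbing \<open>f\<close> by a small constant \<open>\<plusminus>t e\<close> changes neither \<open>L(f)\<close> nor
  (hence) the Lipschitz norm, so \<open>Tf(y\<^sub>0) \<plusminus> t (T\<tilde>e)(y\<^sub>0)\<close> both lie in the ball of radius \<open>L(f)\<close>.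
  Their midpoint \<open>Tf(y\<^sub>0)\<close> lies on its boundary, so strict convexity of \<open>F\<close> forces \<open>(T\<tilde>e)(y\<^sub>0) = 0\<close>,
  which Property P excludes for a suitable \<open>e\<close>.\<close>

lemma Lip_const: "(\<lambda>x::'x::metric_space. e::'e::real_normed_vector) \<in> Lip"
  unfolding Lip_def using lipschitz_on_constant[of UNIV e] by auto

lemma Lip_add_const:
  assumes "f \<in> Lip"
  shows "(\<lambda>x::'x::metric_space. f x + (e::'e::real_normed_vector)) \<in> Lip"
proof -
  from assms obtain C where C: "C-lipschitz_on UNIV f" and bdd: "bounded (range f)"
    unfolding Lip_def by auto
  have "range (\<lambda>x. f x + e) = (\<lambda>x. e + x) ` range f"
    by (auto simp: add.commute)
  then have "bounded (range (\<lambda>x. f x + e))"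
    using bounded_translation[OF bdd] by simp
  moreover have "(C + 0)-lipschitz_on UNIV (\<lambda>x. f x + e)"
    by (rule lipschitz_on_add[OF C lipschitz_on_constant])
  ultimately show ?thesis
    unfolding Lip_def by auto
qed

lemma norm_le_sup_norm:
  assumes "f \<in> Lip"
  shows "norm (f x) \<le> sup_norm f"
proof -
  from assms obtain B where "\<forall>y\<in>range f. norm y \<le> B"
    unfolding Lip_def by (auto simp: bounded_iff)
  then have "bdd_above (range (\<lambda>x. norm (f x)))"
    by (auto intro!: bdd_aboveI)
  then show ?thesis
    unfolding sup_norm_def using cSUP_upper[of x UNIV "\<lambda>x. norm (f x)"] by simp
qed

lemma sup_norm_nonneg: "f \<in> Lip \<Longrightarrow> 0 \<le> sup_norm f"
  using norm_le_sup_norm norm_ge_zero order_trans by blast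

lemma sup_norm_add_const_le:
  "sup_norm (\<lambda>x. f x + e) \<le> sup_norm f + norm e" if "f \<in> Lip"
  unfolding sup_norm_def
proof (rule cSUP_least)
  fix x
  show "norm (f x + e) \<le> (SUP x. norm (f x)) + norm e"
    using norm_triangle_ineq[of "f x" e] norm_le_sup_norm[OF that, of x]
    unfolding sup_norm_def by linarith
qed simp

lemma lip_num_add_const: "lip_num (\<lambda>x. f x + e) = lip_num f"
  unfolding lip_num_def by (simp add: dist_norm)

lemma lip_norm_add_small_const:
  assumes "f \<in> Lip" and "sup_norm f + norm e < lip_num f"
  shows "lip_norm (\<lambda>x. f x + e) = lip_num f"
  using sup_norm_add_const_le[OF assms(1), of e] assms(2)
  unfolding lip_norm_def lip_num_add_const by simp

lemma strictly_convex_sphere_not_midpoint: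
  fixes a v :: "'f::real_normed_vector"
  assumes sc: "strictly_convex TYPE('f)" and M: "M > 0" and a: "norm a = M"
    and plus: "norm (a + v) \<le> M" and minus: "norm (a - v) \<le> M"
  shows "v = 0"
proof (rule ccontr)
  assume v: "v \<noteq> 0"
  have sum: "(a + v) + (a - v) = 2 *\<^sub>R a"
    by (simp add: scaleR_2)
  have "2 * M = norm ((a + v) + (a - v))"
    using sum a M by simp
  also have "\<dots> \<le> norm (a + v) + norm (a - v)"
    by (rule norm_triangle_ineq)
  finally have "norm (a + v) = M" and "norm (a - v) = M"
    using plus minus by linarith+
  then have "norm ((1/M) *\<^sub>R (a + v)) = 1" and "norm ((1/M) *\<^sub>R (a - v)) = 1"
    using M by auto
  moreover have "(1/M) *\<^sub>R (a + v) \<noteq> (1/M) *\<^sub>R (a - v)"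
    using M v by (simp add: algebra_simps flip: scaleR_2)
  ultimately have "norm ((1/M) *\<^sub>R (a + v) + (1/M) *\<^sub>R (a - v)) < 2"
    using sc unfolding strictly_convex_def by blast
  with sum a M show False
    by (simp flip: scaleR_add_right)
qed

lemma exists_pos_mult_less:
  fixes a d :: real
  assumes "0 < d"
  obtains t where "t > 0" and "t * \<bar>a\<bar> < d"
proof
  show "d / (\<bar>a\<bar> + 1) * \<bar>a\<bar> < d"
    using assms by (simp add: field_simps)
qed (use assms in simp)

lemma norm_image_add_small_const_le:
  fixes T :: "('x::metric_space \<Rightarrow> 'e::real_normed_vector) \<Rightarrow> ('y::metric_space \<Rightarrow> 'f::real_normed_vector)"
  assumes maps: "\<forall>g\<in>Lip. T g \<in> Lip"
    and add: "\<forall>g\<in>Lip. \<forall>h\<in>Lip. T (\<lambda>x. g x + h x) = (\<lambda>y. T g y + T h y)"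
    and smult: "\<forall>g\<in>Lip. \<forall>c::real. T (\<lambda>x. c *\<^sub>R g x) = (\<lambda>y. c *\<^sub>R T g y)"
    and isom: "\<forall>g\<in>Lip. lip_norm (T g) = lip_norm g"
    and f_Lip: "f \<in> Lip"
    and small: "sup_norm f + \<bar>c\<bar> * norm e < lip_num f"
  shows "norm (T f y + c *\<^sub>R T (\<lambda>x. e) y) \<le> lip_num f"
proof -
  let ?g = "\<lambda>x. f x + c *\<^sub>R e"
  have g_Lip: "?g \<in> Lip"
    by (rule Lip_add_const[OF f_Lip])
  have "T ?g = (\<lambda>y. T f y + c *\<^sub>R T (\<lambda>x. e) y)"
    using add[rule_format, OF f_Lip Lip_const] smult[rule_format, OF Lip_const] by simp
  moreover have "lip_norm (T ?g) = lip_num f"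
    using isom g_Lip lip_norm_add_small_const[OF f_Lip] small by simp
  moreover have "norm (T ?g y) \<le> sup_norm (T ?g)"
    using norm_le_sup_norm maps g_Lip by blast
  ultimately show ?thesis
    unfolding lip_norm_def by simp
qed

theorem lemma4p3:
  fixes T :: "('x::metric_space \<Rightarrow> 'e::real_normed_vector) \<Rightarrow> ('y::metric_space \<Rightarrow> 'f::real_normed_vector)"
    and f :: "'x \<Rightarrow> 'e" and y0 :: 'y
  assumes sc_E: "strictly_convex TYPE('e)"
    and sc_F: "strictly_convex TYPE('f)"
    and maps: "\<forall>g\<in>Lip. T g \<in> Lip"
    and surj: "T ` Lip = Lip"
    and add: "\<forall>g\<in>Lip. \<forall>h\<in>Lip. T (\<lambda>x. g x + h x) = (\<lambda>y. T g y + T h y)"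
    and smult: "\<forall>g\<in>Lip. \<forall>c::real. T (\<lambda>x. c *\<^sub>R g x) = (\<lambda>y. c *\<^sub>R T g y)"
    and isom: "\<forall>g\<in>Lip. lip_norm (T g) = lip_norm g"
    and propP: "\<forall>y. \<exists>e::'e. T (\<lambda>x. e) y \<noteq> 0"
    and f_Lip: "f \<in> Lip"
    and peak: "norm (T f y0) = sup_norm (T f)"
    and gt: "sup_norm (T f) > lip_num (T f)"
  shows "lip_num f \<le> sup_norm f"
proof (rule ccontr)
  assume "\<not> lip_num f \<le> sup_norm f"
  then have L_pos: "lip_num f > 0" and gap: "lip_num f - sup_norm f > 0"
    using sup_norm_nonneg[OF f_Lip] by linarith+
  have peak_L: "norm (T f y0) = lip_num f"
    using isom f_Lip gt gap peak unfolding lip_norm_def by auto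
  obtain e :: 'e where e: "T (\<lambda>x. e) y0 \<noteq> 0"
    using propP by blast
  obtain t where t_pos: "t > 0" and t_small: "t * \<bar>norm e\<bar> < lip_num f - sup_norm f"
    using exists_pos_mult_less[OF gap] by blast
  have "norm (T f y0 + c *\<^sub>R T (\<lambda>x. e) y0) \<le> lip_num f" if "\<bar>c\<bar> = t" for c
    using norm_image_add_small_const_le[OF maps add smult isom f_Lip] that t_small by simp
  from this[of t] this[of "-t"] have "t *\<^sub>R T (\<lambda>x. e) y0 = 0"
    using t_pos by (intro strictly_convex_sphere_not_midpoint[OF sc_F L_pos peak_L]) auto
  then show False
    using e t_pos by simp
qed

end
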